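(* Let $k$ be a positive integer, $G$ a graph and $e$ an edge of $G$. Then $\gamma_{P,k}(G)-1\le \gamma_{P,k}(G/e)\le \gamma_{P,k}(G)+1$. Moreover, if $\gamma_{P,k}(G/e)=\gamma_{P,k}(G)-1$ then $\mathrm{rad}_{P,k}(G)\le \mathrm{rad}_{P,k}(G/e)$, and if $\gamma_{P,k}(G/e)=\gamma_{P,k}(G)+1$ then $\mathrm{rad}_{P,k}(G/e)\le \mathrm{rad}_{P,k}(G)$.
   Context: All graphs are finite and simple. For an edge $e=xy$, the contraction $G/e$ is obtained from $G-e$ by replacing $x$ and $y$ by a new vertex $v_{xy}$ adjacent to all vertices of $N_{G-e}(x)\cup N_{G-e}(y)$ (other than $x,y$). $N_G[v]$ is the closed neighbourhood of $v$, and $N_G[S]$ the union of closed neighbourhoods of vertices of $S$. For $S\subseteq V(G)$, define $\mathcal{P}^{0}_{G,k}(S)=N_G[S]$ and $\mathcal{P}^{i+1}_{G,k}(S)=\bigcup\{N_G[v] : v\in \mathcal{P}^{i}_{G,k}(S),\ |N_G[v]\setminus \mathcal{P}^{i}_{G,k}(S)|\le k\}$; these increase and stabilize to $\mathcal{P}^{\infty}_{G,k}(S)$. $S$ is a $k$-power dominating set ($k$-PDS) if $\mathcal{P}^{\infty}_{G,k}(S)=V(G)$; $\gamma_{P,k}(G)$ is the minimum size of a $k$-PDS. For a $k$-PDS $S$, $\mathrm{rad}_{P,k}(G,S)=1+\min\{i:\mathcal{P}^{i}_{G,k}(S)=V(G)\}$, and $\mathrm{rad}_{P,k}(G)$ is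 the minimum of $\mathrm{rad}_{P,k}(G,S)$ over all $k$-PDS $S$ of $G$ with $|S|=\gamma_{P,k}(G)$. *)

theory Defs
  imports Main
begin

definition simple_graph :: "'a set \<Rightarrow> 'a set set \<Rightarrow> bool" where
  "simple_graph V E \<longleftrightarrow> finite V \<and>
     (\<forall>e\<in>E. \<exists>u w. e = {u, w} \<and> u \<noteq> w \<and> u \<in> V \<and> w \<in> V)"

definition cnbhd :: "'a set set \<Rightarrow> 'a \<Rightarrow> 'a set" where
  "cnbhd E v = insert v {u. {u, v} \<in> E}"

definition cnbhd_set :: "'a set set \<Rightarrow> 'a set \<Rightarrow> 'a set" where
  "cnbhd_set E S = (\<Union>v\<in>S. cnbhd E v)"

fun pds_obs :: "'a set set \<Rightarrow> nat \<Rightarrow> 'a set \<Rightarrow> nat \<Rightarrow> 'a set" where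
  "pds_obs E k S 0 = cnbhd_set E S"
| "pds_obs E k S (Suc i) =
     \<Union>{cnbhd E v | v. v \<in> pds_obs E k S i \<and> card (cnbhd E v - pds_obs E k S i) \<le> k}"

definition pds_inf :: "'a set set \<Rightarrow> nat \<Rightarrow> 'a set \<Rightarrow> 'a set" where
  "pds_inf E k S = (\<Union>i. pds_obs E k S i)"

definition is_kPDS :: "'a set \<Rightarrow> 'a set set \<Rightarrow> nat \<Rightarrow> 'a set \<Rightarrow> bool" where
  "is_kPDS V E k S \<longleftrightarrow> S \<subseteq> V \<and> pds_inf E k S = V"

definition gamma_Pk :: "'a set \<Rightarrow> 'a set set \<Rightarrow> nat \<Rightarrow> nat" where
  "gamma_Pk V E k = (LEAST n. \<exists>S. is_kPDS V E k S \<and> card S = n)"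

definition rad_Pk_set :: "'a set \<Rightarrow> 'a set set \<Rightarrow> nat \<Rightarrow> 'a set \<Rightarrow> nat" where
  "rad_Pk_set V E k S = 1 + (LEAST i. pds_obs E k S i = V)"

definition rad_Pk :: "'a set \<Rightarrow> 'a set set \<Rightarrow> nat \<Rightarrow> nat" where
  "rad_Pk V E k = (LEAST r. \<exists>S. is_kPDS V E k S \<and> card S = gamma_Pk V E k
                                \<and> rad_Pk_set V E k S = r)"

text \<open>Contraction of the edge {x,y}: the new vertex v_xy is None, other vertices v become Some v.\<close>
definition contract_V :: "'a set \<Rightarrow> 'a \<Rightarrow> 'a \<Rightarrow> 'a option set" where
  "contract_V V x y = insert None (Some ` (V - {x, y}))"

definition contract_E :: "'a set set \<Rightarrow> 'a \<Rightarrow> 'a \<Rightarrow> 'a option set set" where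
  "contract_E E x y =
     {{Some u, Some w} | u w. {u, w} \<in> E \<and> u \<notin> {x, y} \<and> w \<notin> {x, y}}
   \<union> {{None, Some u} | u. u \<notin> {x, y} \<and> ({u, x} \<in> E \<or> {u, y} \<in> E)}"

end

theory Submission
  imports Defs
begin

text \<open>
  Both inequalities come from transferring k-power dominating sets across the contraction
  while adding at most one vertex and without slowing down the observation process.
  A k-PDS S of G gives the k-PDS (S/e) \<union> {v_xy} of G/e: the image of every observed set
  of G is observed in G/e at the same step, because v_xy is observed from the start and the
  contraction map never increases the number of unobserved neighbours.  Conversely a k-PDS S'
  of G/e gives the k-PDS (preimage of S' in G) \<union> {x} of G: then x and y are observed from
  the start, and the preimage of every observed set of G/e is observed in G at the same step.
  When the domination numbers differ by exactly one, the transferred set of a minimum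
  radius minimum k-PDS is again a minimum k-PDS, which yields the radius inequalities.
\<close>

lemma simple_graph_edgeD:
  "simple_graph V E \<Longrightarrow> {u, w} \<in> E \<Longrightarrow> u \<in> V \<and> w \<in> V \<and> u \<noteq> w"
  unfolding simple_graph_def by (auto simp: doubleton_eq_iff)

lemma cnbhd_subset: "simple_graph V E \<Longrightarrow> v \<in> V \<Longrightarrow> cnbhd E v \<subseteq> V"
  unfolding cnbhd_def using simple_graph_edgeD by fastforce

lemma finite_cnbhd: "simple_graph V E \<Longrightarrow> v \<in> V \<Longrightarrow> finite (cnbhd E v)"
  using cnbhd_subset simple_graph_def finite_subset by metis

lemma self_in_cnbhd: "v \<in> cnbhd E v"
  by (simp add: cnbhd_def)

lemma card_insert_le_Suc_card: "card (insert x A) \<le> Suc (card A)"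
  by (cases "finite A") (auto simp: card_insert_if)

subsection \<open>The observation process\<close>

lemma mem_pds_obs_Suc_iff: "w \<in> pds_obs E k S (Suc i) \<longleftrightarrow>
   (\<exists>v. v \<in> pds_obs E k S i \<and> card (cnbhd E v - pds_obs E k S i) \<le> k \<and> w \<in> cnbhd E v)"
  by auto

declare pds_obs.simps(2) [simp del]

lemma pds_obs_SucE:
  assumes "w \<in> pds_obs E k S (Suc i)"
  obtains v where "v \<in> pds_obs E k S i" "card (cnbhd E v - pds_obs E k S i) \<le> k" "w \<in> cnbhd E v"
  using assms unfolding mem_pds_obs_Suc_iff by blast

lemma cnbhd_subset_pds_obs_Suc:
  "v \<in> pds_obs E k S i \<Longrightarrow> card (cnbhd E v - pds_obs E k S i) \<le> k
   \<Longrightarrow> cnbhd E v \<subseteq> pds_obs E k S (Suc i)"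
  by (auto simp only: mem_pds_obs_Suc_iff)

lemma pds_obs_covered_by_cnbhd:
  assumes "w \<in> pds_obs E k S i"
  obtains v where "v \<in> pds_obs E k S i" "cnbhd E v \<subseteq> pds_obs E k S i" "w \<in> cnbhd E v"
proof (cases i)
  case 0
  with assms obtain s where "s \<in> S" "w \<in> cnbhd E s" by (auto simp: cnbhd_set_def)
  with 0 show ?thesis using self_in_cnbhd[of s E] that by (auto simp: cnbhd_set_def)
next
  case (Suc j)
  with assms obtain v where v: "v \<in> pds_obs E k S j" "card (cnbhd E v - pds_obs E k S j) \<le> k"
      "w \<in> cnbhd E v"
    by (auto elim: pds_obs_SucE)
  have "cnbhd E v \<subseteq> pds_obs E k S (Suc j)" using v(1,2) by (rule cnbhd_subset_pds_obs_Suc)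
  with v Suc show ?thesis using self_in_cnbhd[of v E] that by blast
qed

lemma pds_obs_Suc_mono: "pds_obs E k S i \<subseteq> pds_obs E k S (Suc i)"
proof
  fix w assume "w \<in> pds_obs E k S i"
  then obtain v where v: "v \<in> pds_obs E k S i" "cnbhd E v \<subseteq> pds_obs E k S i" "w \<in> cnbhd E v"
    by (rule pds_obs_covered_by_cnbhd)
  then have "card (cnbhd E v - pds_obs E k S i) = 0" by (simp add: card_eq_0_iff)
  then have "cnbhd E v \<subseteq> pds_obs E k S (Suc i)" using cnbhd_subset_pds_obs_Suc[OF v(1)] by simp
  with v(3) show "w \<in> pds_obs E k S (Suc i)" by blast
qed

lemma pds_obs_mono: "i \<le> j \<Longrightarrow> pds_obs E k S i \<subseteq> pds_obs E k S j"
  using lift_Suc_mono_le[of "pds_obs E k S", OF pds_obs_Suc_mono] by blast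

lemma pds_obs_subset:
  assumes "simple_graph V E" "S \<subseteq> V"
  shows "pds_obs E k S i \<subseteq> V"
proof (induction i)
  case 0
  then show ?case using assms cnbhd_subset by (fastforce simp: cnbhd_set_def)
next
  case (Suc i)
  then show ?case using assms cnbhd_subset by (fastforce simp only: mem_pds_obs_Suc_iff)
qed

lemma is_kPDS_if_pds_obs_eq:
  assumes "simple_graph V E" "S \<subseteq> V" "pds_obs E k S i = V"
  shows "is_kPDS V E k S"
  using assms pds_obs_subset[OF assms(1,2)] unfolding is_kPDS_def pds_inf_def by blast

lemma is_kPDS_pds_obs_eq:
  assumes "simple_graph V E" "is_kPDS V E k S"
  obtains i where "pds_obs E k S i = V"
proof -
  have "finite V" using assms(1) by (simp add: simple_graph_def)
  have "\<exists>i. F \<subseteq> pds_obs E k S i" if "F \<subseteq> V" for F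
    using finite_subset[OF that \<open>finite V\<close>] that
  proof (induction F rule: finite_induct)
    case empty
    then show ?case by simp
  next
    case (insert a F)
    then obtain i where i: "F \<subseteq> pds_obs E k S i" by auto
    from insert.prems assms(2) obtain j where j: "a \<in> pds_obs E k S j"
      by (auto simp: is_kPDS_def pds_inf_def)
    have "pds_obs E k S i \<union> pds_obs E k S j \<subseteq> pds_obs E k S (max i j)"
      using pds_obs_mono[of i "max i j" E k S] pds_obs_mono[of j "max i j" E k S] by simp
    with i j show ?case by blast
  qed
  then obtain i where "V \<subseteq> pds_obs E k S i" by blast
  moreover have "pds_obs E k S i \<subseteq> V"
    using pds_obs_subset[OF assms(1)] assms(2) by (auto simp: is_kPDS_def)
  ultimately show ?thesis using that by blast
qed

subsection \<open>Domination number and radius\<close>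

lemma gamma_Pk_le_card: "is_kPDS V E k S \<Longrightarrow> gamma_Pk V E k \<le> card S"
  unfolding gamma_Pk_def by (rule Least_le) blast

lemma rad_Pk_le_rad_Pk_set:
  "is_kPDS V E k S \<Longrightarrow> card S = gamma_Pk V E k \<Longrightarrow> rad_Pk V E k \<le> rad_Pk_set V E k S"
  unfolding rad_Pk_def by (rule Least_le) blast

lemma rad_Pk_attained:
  assumes "simple_graph V E"
  obtains S where "is_kPDS V E k S" "card S = gamma_Pk V E k" "rad_Pk_set V E k S = rad_Pk V E k"
proof -
  have "pds_obs E k V 0 = V"
    using assms cnbhd_subset self_in_cnbhd by (fastforce simp: cnbhd_set_def)
  then have "is_kPDS V E k V" using is_kPDS_if_pds_obs_eq[OF assms] by blast
  have "\<exists>S. is_kPDS V E k S \<and> card S = gamma_Pk V E k"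
    unfolding gamma_Pk_def by (rule LeastI_ex) (use \<open>is_kPDS V E k V\<close> in blast)
  then have "\<exists>S. is_kPDS V E k S \<and> card S = gamma_Pk V E k \<and> rad_Pk_set V E k S = rad_Pk V E k"
    unfolding rad_Pk_def by - (rule LeastI_ex, blast)
  with that show ?thesis by blast
qed

lemma rad_Pk_set_mono:
  assumes "simple_graph V' E'" "is_kPDS V' E' k S'"
    and "\<And>i. pds_obs E' k S' i = V' \<Longrightarrow> pds_obs E k S i = V"
  shows "rad_Pk_set V E k S \<le> rad_Pk_set V' E' k S'"
proof -
  obtain i where "pds_obs E' k S' i = V'" using is_kPDS_pds_obs_eq assms(1,2) by blast
  then have "pds_obs E' k S' (LEAST i. pds_obs E' k S' i = V') = V'" by (rule LeastI)
  then have "(LEAST i. pds_obs E k S i = V) \<le> (LEAST i. pds_obs E' k S' i = V')"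
    using assms(3) by (intro Least_le) blast
  then show ?thesis by (simp add: rad_Pk_set_def)
qed

lemma gamma_rad_Pk_transfer:
  assumes "simple_graph V E"
    and transfer: "\<And>S. is_kPDS V E k S \<Longrightarrow> \<exists>S'. is_kPDS V' E' k S' \<and> card S' \<le> card S + 1
                          \<and> rad_Pk_set V' E' k S' \<le> rad_Pk_set V E k S"
  shows "gamma_Pk V' E' k \<le> gamma_Pk V E k + 1
    \<and> (gamma_Pk V' E' k = gamma_Pk V E k + 1 \<longrightarrow> rad_Pk V' E' k \<le> rad_Pk V E k)"
proof -
  obtain S where S: "is_kPDS V E k S" "card S = gamma_Pk V E k" "rad_Pk_set V E k S = rad_Pk V E k"
    using rad_Pk_attained[OF assms(1)] .
  obtain S' where S': "is_kPDS V' E' k S'" "card S' \<le> card S + 1"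
      "rad_Pk_set V' E' k S' \<le> rad_Pk_set V E k S"
    using transfer[OF S(1)] by blast
  have gamma: "gamma_Pk V' E' k \<le> card S'" using gamma_Pk_le_card[OF S'(1)] .
  moreover have "rad_Pk V' E' k \<le> rad_Pk V E k" if "gamma_Pk V' E' k = gamma_Pk V E k + 1"
  proof -
    have "card S' = gamma_Pk V' E' k" using gamma S(2) S'(2) that by simp
    then show ?thesis using rad_Pk_le_rad_Pk_set[OF S'(1)] S(3) S'(3) by simp
  qed
  ultimately show ?thesis using S(2) S'(2) by simp
qed

subsection \<open>Edge contraction\<close>

definition contract_vertex :: "'a \<Rightarrow> 'a \<Rightarrow> 'a \<Rightarrow> 'a option" where
  "contract_vertex x y v = (if v = x \<or> v = y then None else Some v)"

lemma contract_V_eq_image: "x \<in> V \<Longrightarrow> contract_V V x y = contract_vertex x y ` V"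
  unfolding contract_V_def contract_vertex_def by (auto simp: image_iff)

lemma inj_on_contract_vertex: "inj_on (contract_vertex x y) (A - {x})"
  unfolding inj_on_def contract_vertex_def by auto

lemma cnbhd_contract_Some:
  "u \<notin> {x, y} \<Longrightarrow> cnbhd (contract_E E x y) (Some u) = contract_vertex x y ` cnbhd E u"
  unfolding cnbhd_def contract_E_def contract_vertex_def
  by (rule set_eqI, case_tac xa) (auto simp: doubleton_eq_iff insert_commute image_iff)

lemma cnbhd_contract_None:
  "cnbhd (contract_E E x y) None = contract_vertex x y ` (cnbhd E x \<union> cnbhd E y)"
  unfolding cnbhd_def contract_E_def contract_vertex_def
  by (rule set_eqI, case_tac xa) (auto simp: doubleton_eq_iff insert_commute image_iff)

lemma image_cnbhd_subset_cnbhd_contract: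
  "contract_vertex x y ` cnbhd E u \<subseteq> cnbhd (contract_E E x y) (contract_vertex x y u)"
  using cnbhd_contract_None[of E x y] cnbhd_contract_Some[of u x y E]
  by (cases "u = x \<or> u = y") (auto simp: contract_vertex_def)

lemma cnbhd_contract_preimage:
  assumes "Some v \<in> cnbhd (contract_E E x y) c" "c \<in> contract_V V x y" "x \<in> V" "y \<in> V"
  obtains u where "u \<in> V" "contract_vertex x y u = c" "v \<in> cnbhd E u"
proof (cases c)
  case None
  with assms(1) have "v \<in> cnbhd E x \<union> cnbhd E y"
    by (auto simp: cnbhd_contract_None contract_vertex_def split: if_splits)
  with None assms(3,4) that show ?thesis by (auto simp: contract_vertex_def)
next
  case (Some u)
  with assms(2) have u: "u \<in> V" "u \<notin> {x, y}" by (auto simp: contract_V_def)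
  with Some assms(1) have "v \<in> cnbhd E u"
    by (auto simp: cnbhd_contract_Some contract_vertex_def split: if_splits)
  with u Some that show ?thesis by (auto simp: contract_vertex_def)
qed

lemma simple_graph_contract:
  assumes "simple_graph V E"
  shows "simple_graph (contract_V V x y) (contract_E E x y)"
  unfolding simple_graph_def
proof (intro conjI ballI)
  show "finite (contract_V V x y)" using assms by (simp add: simple_graph_def contract_V_def)
next
  fix e assume "e \<in> contract_E E x y"
  then consider (old) u w where "e = {Some u, Some w}" "{u, w} \<in> E" "u \<notin> {x, y}" "w \<notin> {x, y}"
    | (new) u where "e = {None, Some u}" "u \<notin> {x, y}" "{u, x} \<in> E \<or> {u, y} \<in> E"
    unfolding contract_E_def by blast
  then show "\<exists>u w. e = {u, w} \<and> u \<noteq> w \<and> u \<in> contract_V V x y \<and> w \<in> contract_V V x y"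
  proof cases
    case old
    then show ?thesis using simple_graph_edgeD[OF assms, of u w] by (auto simp: contract_V_def)
  next
    case new
    then show ?thesis using simple_graph_edgeD[OF assms, of u x] simple_graph_edgeD[OF assms, of u y]
      by (auto simp: contract_V_def)
  qed
qed

subsection \<open>From G to G/e\<close>

lemma image_pds_obs_subset_pds_obs_contract:
  assumes sg: "simple_graph V E" and SV: "S \<subseteq> V"
  shows "contract_vertex x y ` pds_obs E k S i
           \<subseteq> pds_obs (contract_E E x y) k (insert None (contract_vertex x y ` S)) i"
proof (induction i)
  let ?f = "contract_vertex x y" and ?E' = "contract_E E x y"
  let ?S' = "insert None (?f ` S)"
  {
    case 0
    show ?case
    proof
      fix c assume "c \<in> ?f ` pds_obs E k S 0"
      then obtain s w where "s \<in> S" "w \<in> cnbhd E s" "c = ?f w" by (auto simp: cnbhd_set_def)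
      then have "?f s \<in> ?S'" "c \<in> cnbhd ?E' (?f s)"
        using image_cnbhd_subset_cnbhd_contract[of x y E s] by auto
      then show "c \<in> pds_obs ?E' k ?S' 0" by (auto simp: cnbhd_set_def)
    qed
  next
    case (Suc i)
    let ?A = "pds_obs E k S i" and ?A' = "pds_obs ?E' k ?S' i"
    show ?case
    proof
      fix c assume "c \<in> ?f ` pds_obs E k S (Suc i)"
      then obtain w where w: "w \<in> pds_obs E k S (Suc i)" and c: "c = ?f w" by blast
      from w obtain u where u: "u \<in> ?A" "card (cnbhd E u - ?A) \<le> k" "w \<in> cnbhd E u"
        by (rule pds_obs_SucE)
      have c_nbhd: "c \<in> cnbhd ?E' (?f u)"
        using image_cnbhd_subset_cnbhd_contract[of x y E u] u(3) c by blast
      show "c \<in> pds_obs ?E' k ?S' (Suc i)"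
      proof (cases "u = x \<or> u = y")
        case True
        then have "c \<in> cnbhd ?E' None" using c_nbhd by (simp add: contract_vertex_def)
        then have "c \<in> pds_obs ?E' k ?S' 0" by (auto simp: cnbhd_set_def)
        then show ?thesis using pds_obs_mono[of 0 "Suc i" ?E' k ?S'] by blast
      next
        case False
        then have fu: "?f u = Some u" by (simp add: contract_vertex_def)
        have fin: "finite (cnbhd E u - ?A)"
          using finite_cnbhd[OF sg] pds_obs_subset[OF sg SV] u(1) by blast
        have "?f ` cnbhd E u - ?A' \<subseteq> ?f ` (cnbhd E u - ?A)" using Suc by blast
        then have "cnbhd ?E' (Some u) - ?A' \<subseteq> ?f ` (cnbhd E u - ?A)"
          using cnbhd_contract_Some[of u x y E] False by simp
        then have "card (cnbhd ?E' (Some u) - ?A') \<le> card (?f ` (cnbhd E u - ?A))"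
          by (rule card_mono[OF finite_imageI[OF fin]])
        also have "\<dots> \<le> card (cnbhd E u - ?A)" by (rule card_image_le[OF fin])
        finally have "card (cnbhd ?E' (Some u) - ?A') \<le> card (cnbhd E u - ?A)" .
        with u(2) have "card (cnbhd ?E' (Some u) - ?A') \<le> k" by simp
        moreover have "?f u \<in> ?A'" using Suc u(1) by blast
        ultimately have "cnbhd ?E' (Some u) \<subseteq> pds_obs ?E' k ?S' (Suc i)"
          using cnbhd_subset_pds_obs_Suc fu by simp
        with c_nbhd fu show ?thesis by auto
      qed
    qed
  }
qed

lemma kPDS_contract_from_kPDS:
  assumes sg: "simple_graph V E" and e: "{x, y} \<in> E" and S: "is_kPDS V E k S"
  shows "\<exists>S'. is_kPDS (contract_V V x y) (contract_E E x y) k S' \<and> card S' \<le> card S + 1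
    \<and> rad_Pk_set (contract_V V x y) (contract_E E x y) k S' \<le> rad_Pk_set V E k S"
proof -
  let ?V' = "contract_V V x y" and ?E' = "contract_E E x y"
  let ?S' = "insert None (contract_vertex x y ` S)"
  have SV: "S \<subseteq> V" using S by (simp add: is_kPDS_def)
  have V': "?V' = contract_vertex x y ` V"
    using simple_graph_edgeD[OF sg e] by (simp add: contract_V_eq_image)
  have "None \<in> ?V'" by (simp add: contract_V_def)
  then have S'V': "?S' \<subseteq> ?V'" using image_mono[OF SV] V' by simp
  have sg': "simple_graph ?V' ?E'" using simple_graph_contract[OF sg] .
  have reach: "pds_obs ?E' k ?S' i = ?V'" if "pds_obs E k S i = V" for i
  proof (rule subset_antisym)
    show "pds_obs ?E' k ?S' i \<subseteq> ?V'" using pds_obs_subset[OF sg' S'V'] .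
    show "?V' \<subseteq> pds_obs ?E' k ?S' i"
      using image_pds_obs_subset_pds_obs_contract[OF sg SV, of x y k i] that V' by simp
  qed
  obtain i where "pds_obs E k S i = V" using is_kPDS_pds_obs_eq[OF sg S] .
  then have "is_kPDS ?V' ?E' k ?S'" using is_kPDS_if_pds_obs_eq[OF sg' S'V'] reach by blast
  moreover have "card ?S' \<le> card S + 1"
  proof -
    have "finite S" using SV sg finite_subset simple_graph_def by metis
    have "card ?S' \<le> Suc (card (contract_vertex x y ` S))" by (rule card_insert_le_Suc_card)
    also have "\<dots> \<le> Suc (card S)" using card_image_le[OF \<open>finite S\<close>] by simp
    finally show ?thesis by simp
  qed
  moreover have "rad_Pk_set ?V' ?E' k ?S' \<le> rad_Pk_set V E k S"
    using rad_Pk_set_mono[OF sg S] reach by blast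
  ultimately show ?thesis by blast
qed

subsection \<open>From G/e to G\<close>

lemma card_unobserved_le_card_unobserved_contract:
  assumes sg: "simple_graph V E" and u: "u \<in> V" and "x \<in> A"
    and pullback: "{v \<in> V. contract_vertex x y v \<in> A'} \<subseteq> A"
  shows "card (cnbhd E u - A) \<le> card (cnbhd (contract_E E x y) (contract_vertex x y u) - A')"
proof (rule card_inj_on_le)
  show "inj_on (contract_vertex x y) (cnbhd E u - A)"
    using inj_on_contract_vertex[of x y "cnbhd E u - A"] \<open>x \<in> A\<close>
    by (simp add: Diff_insert_absorb insert_Diff_single)
  show "contract_vertex x y ` (cnbhd E u - A)
          \<subseteq> cnbhd (contract_E E x y) (contract_vertex x y u) - A'"
    using image_cnbhd_subset_cnbhd_contract[of x y E u] pullback cnbhd_subset[OF sg u] by blast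
  have "contract_vertex x y u \<in> contract_V V x y"
    using u by (auto simp: contract_V_def contract_vertex_def)
  then show "finite (cnbhd (contract_E E x y) (contract_vertex x y u) - A')"
    using finite_cnbhd[OF simple_graph_contract[OF sg]] by blast
qed

text \<open>Adding x to the preimage makes x and y observed from the start, so that the
  unobserved neighbours of a vertex inject into those of its image.\<close>
lemma pds_obs_contract_pullback_subset:
  assumes sg: "simple_graph V E" and e: "{x, y} \<in> E" and S'V': "S' \<subseteq> contract_V V x y"
  shows "{v \<in> V. contract_vertex x y v \<in> pds_obs (contract_E E x y) k S' i}
     \<subseteq> pds_obs E k (insert x {v \<in> V. contract_vertex x y v \<in> S'}) i"
proof (induction i)
  let ?f = "contract_vertex x y" and ?S = "insert x {v \<in> V. contract_vertex x y v \<in> S'}"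
  have xV: "x \<in> V" and yV: "y \<in> V" using simple_graph_edgeD[OF sg e] by auto
  have xy_obs: "x \<in> pds_obs E k ?S j" "y \<in> pds_obs E k ?S j" for j
    using e pds_obs_mono[of 0 j E k ?S]
    by (auto simp: cnbhd_set_def cnbhd_def insert_commute)
  {
    case 0
    show ?case
    proof
      fix v assume v: "v \<in> {v \<in> V. ?f v \<in> pds_obs (contract_E E x y) k S' 0}"
      show "v \<in> pds_obs E k ?S 0"
      proof (cases "v = x \<or> v = y")
        case True
        then show ?thesis using xy_obs by blast
      next
        case False
        with v have "Some v \<in> cnbhd_set (contract_E E x y) S'"
          by (simp add: contract_vertex_def)
        then obtain s' where s': "s' \<in> S'" "Some v \<in> cnbhd (contract_E E x y) s'"
          by (auto simp: cnbhd_set_def)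
        have "s' \<in> contract_V V x y" using s'(1) S'V' by blast
        then obtain u where "u \<in> V" "?f u = s'" "v \<in> cnbhd E u"
          by (rule cnbhd_contract_preimage[OF s'(2) _ xV yV])
        with s' show ?thesis by (auto simp: cnbhd_set_def)
      qed
    qed
  next
    case (Suc i)
    let ?E' = "contract_E E x y"
    show ?case
    proof
      fix v assume v: "v \<in> {v \<in> V. ?f v \<in> pds_obs ?E' k S' (Suc i)}"
      show "v \<in> pds_obs E k ?S (Suc i)"
      proof (cases "v = x \<or> v = y")
        case True
        then show ?thesis using xy_obs by blast
      next
        case False
        with v have "Some v \<in> pds_obs ?E' k S' (Suc i)" by (simp add: contract_vertex_def)
        then obtain c where c: "c \<in> pds_obs ?E' k S' i"
            "card (cnbhd ?E' c - pds_obs ?E' k S' i) \<le> k" "Some v \<in> cnbhd ?E' c"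
          by (rule pds_obs_SucE)
        have "c \<in> contract_V V x y"
          using pds_obs_subset[OF simple_graph_contract[OF sg] S'V'] c(1) by blast
        then obtain u where u: "u \<in> V" "?f u = c" "v \<in> cnbhd E u"
          by (rule cnbhd_contract_preimage[OF c(3) _ xV yV])
        have "u \<in> pds_obs E k ?S i" using Suc u(1,2) c(1) by blast
        moreover have "card (cnbhd E u - pds_obs E k ?S i) \<le> k"
          using card_unobserved_le_card_unobserved_contract[OF sg u(1) xy_obs(1) Suc] u(2) c(2)
          by simp
        ultimately have "cnbhd E u \<subseteq> pds_obs E k ?S (Suc i)" by (rule cnbhd_subset_pds_obs_Suc)
        with u(3) show ?thesis by blast
      qed
    qed
  }
qed

lemma kPDS_from_kPDS_contract:
  assumes sg: "simple_graph V E" and e: "{x, y} \<in> E"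
    and S': "is_kPDS (contract_V V x y) (contract_E E x y) k S'"
  shows "\<exists>S. is_kPDS V E k S \<and> card S \<le> card S' + 1
    \<and> rad_Pk_set V E k S \<le> rad_Pk_set (contract_V V x y) (contract_E E x y) k S'"
proof -
  let ?V' = "contract_V V x y" and ?E' = "contract_E E x y"
  let ?S = "insert x {v \<in> V. contract_vertex x y v \<in> S'}"
  have xV: "x \<in> V" using simple_graph_edgeD[OF sg e] by auto
  have V': "?V' = contract_vertex x y ` V" using contract_V_eq_image[OF xV] .
  have sg': "simple_graph ?V' ?E'" using simple_graph_contract[OF sg] .
  have S'V': "S' \<subseteq> ?V'" using S' by (simp add: is_kPDS_def)
  have SV: "?S \<subseteq> V" using xV by auto
  have reach: "pds_obs E k ?S i = V" if "pds_obs ?E' k S' i = ?V'" for i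
  proof (rule subset_antisym)
    show "pds_obs E k ?S i \<subseteq> V" using pds_obs_subset[OF sg SV] .
    show "V \<subseteq> pds_obs E k ?S i"
      using pds_obs_contract_pullback_subset[OF sg e S'V', of k i] that V' by blast
  qed
  obtain i where "pds_obs ?E' k S' i = ?V'" using is_kPDS_pds_obs_eq[OF sg' S'] .
  then have "is_kPDS V E k ?S" using is_kPDS_if_pds_obs_eq[OF sg SV] reach by blast
  moreover have "card ?S \<le> card S' + 1"
  proof -
    let ?T = "{v \<in> V. contract_vertex x y v \<in> S'} - {x}"
    have "finite S'" using S'V' sg' finite_subset simple_graph_def by metis
    have "?S = insert x ?T" by blast
    then have "card ?S \<le> Suc (card ?T)" using card_insert_le_Suc_card by metis
    also have "card ?T \<le> card S'"
      by (rule card_inj_on_le[OF inj_on_contract_vertex _ \<open>finite S'\<close>]) blast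
    finally show ?thesis by simp
  qed
  moreover have "rad_Pk_set V E k ?S \<le> rad_Pk_set ?V' ?E' k S'"
    using rad_Pk_set_mono[OF sg' S'] reach by blast
  ultimately show ?thesis by blast
qed

theorem mainTheorem4:
  fixes V :: "'a set" and E :: "'a set set" and k :: nat and x y :: 'a
  assumes "simple_graph V E" and "k \<ge> 1" and "{x, y} \<in> E"
  defines "V' \<equiv> contract_V V x y" and "E' \<equiv> contract_E E x y"
  shows "gamma_Pk V E k \<le> gamma_Pk V' E' k + 1
       \<and> gamma_Pk V' E' k \<le> gamma_Pk V E k + 1
       \<and> (gamma_Pk V' E' k + 1 = gamma_Pk V E k \<longrightarrow> rad_Pk V E k \<le> rad_Pk V' E' k)
       \<and> (gamma_Pk V' E' k = gamma_Pk V E k + 1 \<longrightarrow> rad_Pk V' E' k \<le> rad_Pk V E k)"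
proof -
  have "simple_graph V' E'"
    unfolding V'_def E'_def by (rule simple_graph_contract[OF assms(1)])
  from gamma_rad_Pk_transfer[OF this] kPDS_from_kPDS_contract[OF assms(1,3)]
  have uncontract: "gamma_Pk V E k \<le> gamma_Pk V' E' k + 1
      \<and> (gamma_Pk V E k = gamma_Pk V' E' k + 1 \<longrightarrow> rad_Pk V E k \<le> rad_Pk V' E' k)"
    unfolding V'_def E'_def by blast
  from gamma_rad_Pk_transfer[OF assms(1)] kPDS_contract_from_kPDS[OF assms(1,3)]
  have contract: "gamma_Pk V' E' k \<le> gamma_Pk V E k + 1
      \<and> (gamma_Pk V' E' k = gamma_Pk V E k + 1 \<longrightarrow> rad_Pk V' E' k \<le> rad_Pk V E k)"
    unfolding V'_def E'_def by blast
  show ?thesis using uncontract contract by auto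
qed

end
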